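(* Fix $\epsilon>0$ and let $Q=\{(x,y)\in\mathbb R^2: x>y+\epsilon\}$ (equivalently $Q=\{(x,y):(y,x)\notin P\}$ where $(x,y)\in P\iff x+\epsilon\geq y$). Then there is no family $\mathcal V$ (of any cardinality) of continuous functions $v:\mathbb R\to\mathbb R$ such that for all $x,y\in\mathbb R$: $(x,y)\in Q$ if and only if $v(x)\geq v(y)$ for all $v\in\mathcal V$ and $v(x)>v(y)$ for some $v\in\mathcal V$. In other words, $P$ admits no continuous embedding into $\mathbb R^I$ with the Pareto order, for any index set $I$.
   Context: The Pareto order on $\mathbb R^I$: $(x_\alpha)\succ(y_\alpha)$ iff $x_\alpha\geq y_\alpha$ for all $\alpha\in I$ and $x_\alpha>y_\alpha$ for some $\alpha\in I$. *)

theory Defs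
  imports "HOL-Analysis.Analysis"
begin

definition pareto_represents :: "(real \<Rightarrow> real) set \<Rightarrow> (real \<Rightarrow> real \<Rightarrow> bool) \<Rightarrow> bool" where
  "pareto_represents V Q \<longleftrightarrow>
     (\<forall>x y. Q x y \<longleftrightarrow> ((\<forall>v\<in>V. v x \<ge> v y) \<and> (\<exists>v\<in>V. v x > v y)))"

end

theory Submission
  imports Defs
begin

text \<open>Each v \<in> V satisfies v y \<le> v t whenever t > y + \<epsilon>; letting t decrease to y + \<epsilon>,
  continuity gives v y \<le> v (y + \<epsilon>). Since (y + \<epsilon>, y) is not related, no v increases strictly
  there, so every v is \<epsilon>-periodic. Then no v separates 2\<epsilon> from 0, although 2\<epsilon> > 0 + \<epsilon>.\<close>

lemma pareto_represents_mono:
  assumes "pareto_represents V Q" "Q x y" "v \<in> V"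
  shows "v y \<le> v x"
  using assms unfolding pareto_represents_def by blast

lemma pareto_represents_eq_if_not_related:
  assumes "pareto_represents V Q" "\<not> Q x y" "\<forall>w\<in>V. w y \<le> w x" "v \<in> V"
  shows "v x = v y"
proof -
  have "\<not> v y < v x"
    using assms unfolding pareto_represents_def by blast
  with assms(3,4) show ?thesis by force
qed

lemma isCont_lower_bound_from_right:
  fixes v :: "real \<Rightarrow> real"
  assumes "isCont v a" "\<And>t. a < t \<Longrightarrow> c \<le> v t"
  shows "c \<le> v a"
proof (rule tendsto_lowerbound)
  show "(v \<longlongrightarrow> v a) (at_right a)"
    using assms(1) unfolding isCont_def by (rule tendsto_mono[OF at_le[OF subset_UNIV]])
  show "\<forall>\<^sub>F t in at_right a. c \<le> v t"
    using eventually_at_right_less[of a] by (rule eventually_mono) (rule assms(2))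
qed (rule trivial_limit_at_right_real)

lemma threshold_representation_periodic:
  fixes \<epsilon> :: real
  assumes cont: "\<forall>v\<in>V. continuous_on UNIV v"
    and rep: "pareto_represents V (\<lambda>x y. x > y + \<epsilon>)"
    and "v \<in> V"
  shows "v (y + \<epsilon>) = v y"
proof -
  have weak: "w y \<le> w (y + \<epsilon>)" if "w \<in> V" for w
  proof (rule isCont_lower_bound_from_right[where v = w])
    show "isCont w (y + \<epsilon>)"
      using cont that by (simp add: continuous_on_eq_continuous_at)
    show "w y \<le> w t" if "y + \<epsilon> < t" for t
      using rep that \<open>w \<in> V\<close> by (rule pareto_represents_mono)
  qed
  show ?thesis
    using pareto_represents_eq_if_not_related[OF rep _ _ \<open>v \<in> V\<close>] weak by simp
qed

theorem mainTheorem7: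
  fixes \<epsilon> :: real
  assumes "\<epsilon> > 0"
  shows "\<not> (\<exists>V :: (real \<Rightarrow> real) set.
             (\<forall>v\<in>V. continuous_on UNIV v) \<and>
             pareto_represents V (\<lambda>x y. x > y + \<epsilon>))"
proof
  assume "\<exists>V :: (real \<Rightarrow> real) set.
            (\<forall>v\<in>V. continuous_on UNIV v) \<and> pareto_represents V (\<lambda>x y. x > y + \<epsilon>)"
  then obtain V :: "(real \<Rightarrow> real) set"
    where cont: "\<forall>v\<in>V. continuous_on UNIV v"
      and rep: "pareto_represents V (\<lambda>x y. x > y + \<epsilon>)"
    by blast
  from rep \<open>\<epsilon> > 0\<close> obtain v where "v \<in> V" and "v 0 < v (\<epsilon> + \<epsilon>)"
    unfolding pareto_represents_def by (metis add_0 add_less_cancel_right)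
  moreover have "v (\<epsilon> + \<epsilon>) = v 0"
    using threshold_representation_periodic[OF cont rep \<open>v \<in> V\<close>, of 0]
      threshold_representation_periodic[OF cont rep \<open>v \<in> V\<close>, of \<epsilon>] by simp
  ultimately show False by simp
qed

end
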